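(* For every integer $w\ge 2$ and every $y\in[(1-2^{-w})^{1/2},1)$, \[g(y,w)\le K_w\, g\big((1-2^{-w})^{1/2},w\big)=0.15\,K_w\,\alpha^{-l_w}\,w\,(2c)^{-w}\left(1-2^{-w}\right)^{-1},\] where $K_2=1.11614$, $K_3=1.03$, $K_4=1.01$ and $K_w=1$ for all $w\ge 5$. In particular $K_{w+1}\le K_w$ for all $w\ge 2$.
   Context: Constants: $c=0.7$, $\alpha=1-10^{-4}$, $\psi=13/10$, $\chi=1/2$, and for a positive integer $w$, $l_w=\lceil\log_6(w+1)\rceil$. The function $g$ is \[g(y,w)=c^{-w}\alpha^{-l_w}\,w\,\frac{1-y^2}{y^2}\left(1-(1-y^2)^{1/w}\right)\left(\psi-\left(\frac{(1-y^2)^{1/w}}{1-(1-y^2)^{1/w}}\right)^{\chi}\right).\] *)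

theory Defs
  imports Complex_Main
begin

definition c_const :: real where "c_const = 7/10"
definition alpha_const :: real where "alpha_const = 1 - 10 powr (-4)"
definition psi_const :: real where "psi_const = 13/10"
definition chi_const :: real where "chi_const = 1/2"

definition l_w :: "nat \<Rightarrow> int" where
  "l_w w = \<lceil>log 6 (real w + 1)\<rceil>"

definition g :: "real \<Rightarrow> nat \<Rightarrow> real" where
  "g y w = c_const powr (- real w) * alpha_const powr (- real_of_int (l_w w)) * real w
     * ((1 - y\<^sup>2) / y\<^sup>2)
     * (1 - (1 - y\<^sup>2) powr (1 / real w))
     * (psi_const - ((1 - y\<^sup>2) powr (1 / real w) / (1 - (1 - y\<^sup>2) powr (1 / real w))) powr chi_const)"

definition K :: "nat \<Rightarrow> real" where
  "K w = (if w = 2 then 1.11614 else if w = 3 then 1.03 else if w = 4 then 1.01 else 1)"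

end

theory Submission
  imports Defs
begin

text \<open>
  Put \<open>s = (1 - y\<^sup>2) powr (1/w)\<close>, so that \<open>y \<ge> sqrt (1 - 2 powr -w)\<close> means
  \<open>0 < s \<le> 1/2\<close> with \<open>s = 1/2\<close> at the threshold, and \<open>t = sqrt (s / (1 - s)) \<in> (0, 1]\<close>.
  Then \<open>g y w\<close> is a positive factor independent of \<open>y\<close> times
  \<open>t\<^sup>2\<^sup>w (13/10 - t) / ((1 + t\<^sup>2) ((1 + t\<^sup>2)\<^sup>w - t\<^sup>2\<^sup>w))\<close>. For \<open>w \<le> 4\<close> the claimed bound is a
  polynomial inequality on \<open>[0, 1]\<close>; for \<open>w \<ge> 5\<close> the estimate
  \<open>s\<^sup>w / (1 - s\<^sup>w) \<le> (2s)\<^sup>5 / (2\<^sup>w - 1)\<close> reduces it to one polynomial inequality independent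
  of \<open>w\<close>. The polynomial inequalities are certified by subdividing the interval and bounding
  Taylor-shifted coefficient lists, which the simplifier evaluates in exact arithmetic.
\<close>

fun horner :: "'a::comm_semiring_1 list \<Rightarrow> 'a \<Rightarrow> 'a" where
  "horner [] x = 0"
| "horner (c # cs) x = c + x * horner cs x"

fun coeffs_add :: "'a::comm_semiring_1 list \<Rightarrow> 'a list \<Rightarrow> 'a list" where
  "coeffs_add [] q = q"
| "coeffs_add p [] = p"
| "coeffs_add (a # p) (b # q) = (a + b) # coeffs_add p q"

lemma horner_coeffs_add: "horner (coeffs_add p q) x = horner p x + horner q x"
  by (induction p q rule: coeffs_add.induct) (auto simp: algebra_simps)

definition coeffs_mult_linear :: "'a::comm_semiring_1 \<Rightarrow> 'a list \<Rightarrow> 'a list" where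
  "coeffs_mult_linear a p = coeffs_add (map ((*) a) p) (0 # p)"

lemma horner_map_mult: "horner (map ((*) a) p) x = a * horner p x"
  by (induction p) (auto simp: algebra_simps)

lemma horner_coeffs_mult_linear: "horner (coeffs_mult_linear a p) x = (a + x) * horner p x"
  by (simp add: coeffs_mult_linear_def horner_coeffs_add horner_map_mult algebra_simps)

fun taylor_shift :: "'a::comm_semiring_1 \<Rightarrow> 'a list \<Rightarrow> 'a list" where
  "taylor_shift a [] = []"
| "taylor_shift a (c # cs) = coeffs_add [c] (coeffs_mult_linear a (taylor_shift a cs))"

lemma horner_taylor_shift: "horner (taylor_shift a p) x = horner p (a + x)"
  by (induction p) (auto simp: horner_coeffs_add horner_coeffs_mult_linear)

text \<open>A lower bound for \<open>horner p x\<close> on \<open>0 \<le> x \<le> d\<close>: each inner Horner value is replaced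
  by its worst case.\<close>

fun horner_lower_bound :: "'a::linordered_idom list \<Rightarrow> 'a \<Rightarrow> 'a" where
  "horner_lower_bound [] d = 0"
| "horner_lower_bound (c # cs) d = c + min 0 (d * horner_lower_bound cs d)"

lemma horner_lower_bound_le:
  assumes "0 \<le> x" "x \<le> d"
  shows "horner_lower_bound p d \<le> horner p x"
proof (induction p)
  case Nil
  then show ?case by simp
next
  case (Cons c cs)
  have "min 0 (d * horner_lower_bound cs d) \<le> x * horner_lower_bound cs d"
    using assms mult_right_mono_neg[of x d "horner_lower_bound cs d"]
    by (cases "horner_lower_bound cs d \<ge> 0") (auto simp: min_le_iff_disj)
  also have "\<dots> \<le> x * horner cs x"
    using Cons.IH assms by (intro mult_left_mono) auto
  finally show ?case by simp
qed

fun pos_on_grid :: "'a::linordered_idom list \<Rightarrow> 'a list \<Rightarrow> bool" where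
  "pos_on_grid p (a # b # bs) =
     (a < b \<and> 0 < horner_lower_bound (taylor_shift a p) (b - a) \<and> pos_on_grid p (b # bs))"
| "pos_on_grid p _ = True"

lemma horner_pos_on_subinterval:
  assumes "0 < horner_lower_bound (taylor_shift a p) (b - a)" "a \<le> u" "u \<le> b"
  shows "0 < horner p u"
proof -
  have "0 < horner_lower_bound (taylor_shift a p) (b - a)" by (fact assms(1))
  also have "\<dots> \<le> horner (taylor_shift a p) (u - a)"
    using assms by (intro horner_lower_bound_le) auto
  finally show ?thesis by (simp add: horner_taylor_shift)
qed

lemma pos_on_grid_horner_pos:
  "pos_on_grid p (a # b # bs) \<Longrightarrow> a \<le> u \<Longrightarrow> u \<le> last (b # bs) \<Longrightarrow> 0 < horner p u"
proof (induction bs arbitrary: a b)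
  case Nil
  then show ?case by (auto intro: horner_pos_on_subinterval)
next
  case (Cons c bs)
  then show ?case
    by (cases "u \<le> b") (auto intro: horner_pos_on_subinterval)
qed

text \<open>The lists are the integer coefficients of \<open>u \<mapsto> C (rhs - lhs) (u / N)\<close> for a suitable
  constant \<open>C > 0\<close> and the grid end \<open>N\<close>.\<close>

lemma K2_polynomial_ineq:
  fixes t :: real
  assumes "0 \<le> t" "t \<le> 1"
  shows "20 * (2^2 - 1) * ((t\<^sup>2)^2 * (13/10 - t)) < 3 * K 2 * ((1 + t\<^sup>2) * ((1 + t\<^sup>2)^2 - (t\<^sup>2)^2))"
proof -
  let ?p = "[981767126580723712, 0, 2808858279936, 0, -19014176, 15625] :: real list"
  have "pos_on_grid ?p [0, 512, 768, 832, 848, 864, 872, 876, 878, 879, 880, 881, 882, 884, 888, 896, 1024]"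
    by (simp add: coeffs_mult_linear_def)
  then have "0 < horner ?p (1024 * t)"
    by (rule pos_on_grid_horner_pos) (use assms in auto)
  also have "horner ?p (1024 * t) = (879609302220800000/3)
      * (3 * K 2 * (1 + t\<^sup>2) * ((1 + t\<^sup>2)^2 - (t\<^sup>2)^2) - 20 * (2^2 - 1) * (t\<^sup>2)^2 * (13/10 - t))"
    by (simp add: K_def field_simps power_def numeral_eq_Suc)
  finally show ?thesis by (simp add: zero_less_mult_iff)
qed

lemma K3_polynomial_ineq:
  fixes t :: real
  assumes "0 \<le> t" "t \<le> 1"
  shows "20 * (2^3 - 1) * ((t\<^sup>2)^3 * (13/10 - t)) < 3 * K 3 * ((1 + t\<^sup>2) * ((1 + t\<^sup>2)^3 - (t\<^sup>2)^3))"
proof -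
  let ?p = "[84937273245696, 0, 82946555904, 0, 30375936, 0, -69092, 875] :: real list"
  have "pos_on_grid ?p [0, 32, 48, 56, 58, 59, 60, 64]"
    by (simp add: coeffs_mult_linear_def)
  then have "0 < horner ?p (64 * t)"
    by (rule pos_on_grid_horner_pos) (use assms in auto)
  also have "horner ?p (64 * t) = 27487790694400
      * (3 * K 3 * (1 + t\<^sup>2) * ((1 + t\<^sup>2)^3 - (t\<^sup>2)^3) - 20 * (2^3 - 1) * (t\<^sup>2)^3 * (13/10 - t))"
    by (simp add: K_def field_simps power_def numeral_eq_Suc)
  finally show ?thesis by (simp add: zero_less_mult_iff)
qed

lemma K4_polynomial_ineq:
  fixes t :: real
  assumes "0 \<le> t" "t \<le> 1"
  shows "20 * (2^4 - 1) * ((t\<^sup>2)^4 * (13/10 - t)) < 3 * K 4 * ((1 + t\<^sup>2) * ((1 + t\<^sup>2)^4 - (t\<^sup>2)^4))"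
proof -
  let ?p = "[222101348810752, 0, 1084479242240, 0, 2118123520, 0, 2068480, 0, -25192, 625] :: real list"
  have "pos_on_grid ?p [0, 16, 24, 28, 30, 31, 32]"
    by (simp add: coeffs_mult_linear_def)
  then have "0 < horner ?p (32 * t)"
    by (rule pos_on_grid_horner_pos) (use assms in auto)
  also have "horner ?p (32 * t) = (219902325555200/3)
      * (3 * K 4 * (1 + t\<^sup>2) * ((1 + t\<^sup>2)^4 - (t\<^sup>2)^4) - 20 * (2^4 - 1) * (t\<^sup>2)^4 * (13/10 - t))"
    by (simp add: K_def field_simps power_def numeral_eq_Suc)
  finally show ?thesis by (simp add: zero_less_mult_iff)
qed

lemma K_polynomial_ineq:
  fixes t :: real
  assumes "w \<in> {2, 3, 4}" "0 \<le> t" "t \<le> 1"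
  shows "20 * (2^w - 1) * ((t\<^sup>2)^w * (13/10 - t)) < 3 * K w * ((1 + t\<^sup>2) * ((1 + t\<^sup>2)^w - (t\<^sup>2)^w))"
  using assms K2_polynomial_ineq K3_polynomial_ineq K4_polynomial_ineq by auto

lemma degree_five_polynomial_ineq:
  fixes t :: real
  assumes "0 \<le> t" "t \<le> 1"
  shows "640 * (t\<^sup>2)^5 * (13/10 - t) \<le> 3 * (1 + t\<^sup>2)^6"
proof -
  \<comment> \<open>Equality holds at \<open>t = 1\<close>, so the certificate is for the quotient by \<open>1 - t\<close>.\<close>
  let ?p = "[52776558133248, 3298534883328, 1443109011456, 90194313216, 17716740096, 1107296256,
             132120576, 8257536, 700416, 43776, -10288, -3] :: real list"
  have "pos_on_grid ?p [0, 16]"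
    by (simp add: coeffs_mult_linear_def)
  then have "0 < horner ?p (16 * t)"
    by (rule pos_on_grid_horner_pos) (use assms in auto)
  then have "0 \<le> (1 - t) * horner ?p (16 * t)"
    using assms by simp
  also have "(1 - t) * horner ?p (16 * t) = 17592186044416 * (3 * (1 + t\<^sup>2)^6 - 640 * (t\<^sup>2)^5 * (13/10 - t))"
    by (simp add: field_simps power_def numeral_eq_Suc)
  finally show ?thesis by (simp add: zero_le_mult_iff)
qed

definition g_scale :: "nat \<Rightarrow> real" where
  "g_scale w = c_const powr (- real w) * alpha_const powr (- real_of_int (l_w w)) * real w"

definition g_core :: "nat \<Rightarrow> real \<Rightarrow> real" where
  "g_core w s = s^w / (1 - s^w) * (1 - s) * (13/10 - sqrt (s / (1 - s)))"

lemma g_scale_pos: "0 < w \<Longrightarrow> 0 < g_scale w"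
proof -
  assume "0 < w"
  moreover have "(10::real) powr (-4) < 10 powr 0"
    by (intro powr_less_mono) auto
  ultimately show ?thesis
    by (simp add: g_scale_def c_const_def alpha_const_def)
qed

lemma g_eq_scale_core:
  assumes "0 < y" "y < 1" "0 < w"
  shows "g y w = g_scale w * g_core w ((1 - y\<^sup>2) powr (1 / real w))"
proof -
  define s where "s = (1 - y\<^sup>2) powr (1 / real w)"
  have r: "0 < 1 - y\<^sup>2" "1 - y\<^sup>2 < 1"
    using assms by (auto simp: power2_less_1_iff abs_less_iff)
  have "s < 1"
    using r assms(3) powr_less_mono2[of "1 / real w" "1 - y\<^sup>2" 1] by (simp add: s_def)
  then have sqrt: "(s / (1 - s)) powr (1/2) = sqrt (s / (1 - s))"
    using r by (simp add: s_def powr_half_sqrt)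
  have sw: "s^w = 1 - y\<^sup>2"
    using r assms(3) by (simp add: s_def powr_realpow[symmetric] powr_powr)
  have "g y w = g_scale w * ((1 - y\<^sup>2) / y\<^sup>2) * (1 - s) * (13/10 - (s / (1 - s)) powr (1/2))"
    by (simp add: g_def g_scale_def psi_const_def chi_const_def s_def)
  also have "(1 - y\<^sup>2) / y\<^sup>2 = s^w / (1 - s^w)"
    by (simp add: sw)
  finally show ?thesis
    by (simp add: g_core_def sqrt s_def[symmetric] mult.assoc)
qed

lemma g_core_half: "0 < w \<Longrightarrow> g_core w (1/2) = 3 / (20 * (2^w - 1))"
  by (simp add: g_core_def power_one_over field_simps)

lemma one_minus_square_fraction:
  fixes t :: real
  shows "1 - t\<^sup>2 / (1 + t\<^sup>2) = 1 / (1 + t\<^sup>2)"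
proof -
  have "0 < 1 + t\<^sup>2"
    by (simp add: add_pos_nonneg)
  then show ?thesis
    by (simp add: field_simps)
qed

lemma sqrt_odds_square_fraction:
  fixes t :: real
  assumes "0 \<le> t"
  shows "sqrt (t\<^sup>2 / (1 + t\<^sup>2) / (1 - t\<^sup>2 / (1 + t\<^sup>2))) = t"
proof -
  have "0 < 1 + t\<^sup>2"
    by (simp add: add_pos_nonneg)
  then show ?thesis
    using assms by (simp add: one_minus_square_fraction)
qed

lemma g_core_square_fraction:
  fixes t :: real
  assumes "0 \<le> t"
  shows "g_core w (t\<^sup>2 / (1 + t\<^sup>2)) = (t\<^sup>2)^w * (13/10 - t) / ((1 + t\<^sup>2) * ((1 + t\<^sup>2)^w - (t\<^sup>2)^w))"
proof -
  define a b where "a = t\<^sup>2" and "b = 1 + t\<^sup>2"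
  have b: "0 < b"
    by (simp add: b_def add_pos_nonneg)
  have "sqrt (a / b / (1 - a / b)) = t"
    unfolding a_def b_def by (rule sqrt_odds_square_fraction[OF assms])
  then have "g_core w (a / b) = (a / b)^w / (1 - (a / b)^w) * (1 / b) * (13/10 - t)"
    unfolding g_core_def by (simp add: a_def b_def one_minus_square_fraction)
  also have "1 - (a / b)^w = (b^w - a^w) / b^w"
    using b by (simp add: power_divide field_simps)
  also have "(a / b)^w / ((b^w - a^w) / b^w) * (1 / b) * (13/10 - t) = a^w * (13/10 - t) / (b * (b^w - a^w))"
    using b by (simp add: power_divide field_simps)
  finally show ?thesis
    by (simp add: a_def b_def)
qed

lemma power_ratio_le:
  fixes s :: real
  assumes "0 \<le> s" "s \<le> 1/2" "k \<le> w" "0 < w"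
  shows "s^w / (1 - s^w) \<le> (2 * s)^k / (2^w - 1)"
proof -
  define z where "z = 2 * s"
  have z: "0 \<le> z" "z \<le> 1"
    using assms by (auto simp: z_def)
  have zw: "z^w \<le> 1"
    using z by (simp add: power_le_one)
  have two_pow: "(1::real) < 2^w"
    using assms(4) by (simp add: one_less_power)
  have "s^w < 1"
    using assms by (simp add: power_less_one_iff)
  then have "s^w / (1 - s^w) = z^w / (2^w - z^w)"
    by (simp add: z_def power_mult_distrib field_simps)
  also have "\<dots> \<le> z^w / (2^w - 1)"
    using z zw two_pow by (intro divide_left_mono) auto
  also have "\<dots> \<le> z^k / (2^w - 1)"
    using z two_pow assms(3) by (intro divide_right_mono power_decreasing) auto
  finally show ?thesis
    by (simp add: z_def)
qed

lemma g_core_le_small: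
  fixes t :: real
  assumes "w \<in> {2, 3, 4}" "0 \<le> t" "t \<le> 1"
  shows "g_core w (t\<^sup>2 / (1 + t\<^sup>2)) \<le> K w * (3 / (20 * (2^w - 1)))"
proof -
  define a where "a = t\<^sup>2"
  define D where "D = (1 + a) * ((1 + a)^w - a^w)"
  define c :: real where "c = 20 * (2^w - 1)"
  have "a^w < (1 + a)^w"
    using assms by (intro power_strict_mono) (auto simp: a_def)
  then have "0 < D"
    by (simp add: D_def a_def add_pos_nonneg)
  have "0 < c"
    using assms(1) by (auto simp: c_def)
  have "c * (a^w * (13/10 - t)) \<le> 3 * K w * D"
    unfolding a_def c_def D_def by (rule less_imp_le[OF K_polynomial_ineq[OF assms]])
  then have "a^w * (13/10 - t) \<le> 3 * K w * D / c"
    using \<open>0 < c\<close> by (simp add: pos_le_divide_eq mult.commute)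
  then show ?thesis
    using \<open>0 < D\<close> g_core_square_fraction[OF assms(2)]
    by (simp add: a_def c_def D_def pos_divide_le_eq mult_ac)
qed

lemma g_core_le_large:
  fixes t :: real
  assumes "5 \<le> w" "0 \<le> t" "t \<le> 1"
  shows "g_core w (t\<^sup>2 / (1 + t\<^sup>2)) \<le> 3 / (20 * (2^w - 1))"
proof -
  define a b where "a = t\<^sup>2" and "b = 1 + t\<^sup>2"
  define s where "s = a / b"
  have b: "0 < b"
    by (simp add: b_def add_pos_nonneg)
  have a: "0 \<le> a" "a \<le> 1"
    using assms by (auto simp: a_def power_le_one)
  have s: "0 \<le> s" "s \<le> 1/2"
    using a b by (auto simp: s_def b_def a_def[symmetric] field_simps)
  have one_minus_s: "1 - s = 1 / b"
    unfolding s_def a_def b_def by (rule one_minus_square_fraction)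
  have factor: "0 \<le> (1 - s) * (13/10 - t)"
    using b assms by (simp add: one_minus_s)
  have two_pow: "(1::real) < 2^w"
    using assms(1) by (simp add: one_less_power)
  have "(2 * s)^5 * ((1 - s) * (13/10 - t)) = 32 * a^5 * (13/10 - t) / (b^5 * b)"
    unfolding one_minus_s unfolding s_def by (simp add: power_divide power_mult_distrib)
  also have "\<dots> = 32 * a^5 * (13/10 - t) / b^6"
    by (simp add: power_Suc2[symmetric])
  also have "\<dots> \<le> 3/20"
    using degree_five_polynomial_ineq[OF assms(2,3)] b by (simp add: a_def b_def divide_le_eq)
  finally have key: "(2 * s)^5 * ((1 - s) * (13/10 - t)) \<le> 3/20" .
  have "g_core w s = s^w / (1 - s^w) * ((1 - s) * (13/10 - t))"
    using sqrt_odds_square_fraction[OF assms(2)] by (simp add: g_core_def s_def a_def b_def)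
  also have "\<dots> \<le> (2 * s)^5 / (2^w - 1) * ((1 - s) * (13/10 - t))"
    using assms(1) s by (intro mult_right_mono[OF power_ratio_le factor]) auto
  also have "\<dots> = (2 * s)^5 * ((1 - s) * (13/10 - t)) / (2^w - 1)"
    by simp
  also have "\<dots> \<le> (3/20) / (2^w - 1)"
    using key two_pow by (intro divide_right_mono) auto
  finally show ?thesis
    by (simp add: s_def a_def b_def)
qed

lemma g_core_le:
  assumes "2 \<le> w" "0 < s" "s \<le> 1/2"
  shows "g_core w s \<le> K w * g_core w (1/2)"
proof -
  define t where "t = sqrt (s / (1 - s))"
  have t: "0 \<le> t" "t \<le> 1"
    using assms by (auto simp: t_def)
  have s: "s = t\<^sup>2 / (1 + t\<^sup>2)"
    using assms by (simp add: t_def field_simps)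
  have half: "g_core w (1/2) = 3 / (20 * (2^w - 1))"
    using assms by (simp add: g_core_half)
  show ?thesis
  proof (cases "w \<le> 4")
    case True
    then have "w \<in> {2, 3, 4}"
      using assms(1) by auto
    then show ?thesis
      using g_core_le_small[OF _ t] s half by auto
  next
    case False
    then show ?thesis
      using g_core_le_large[OF _ t] s half by (simp add: K_def)
  qed
qed

lemma two_powr_neg_ratio:
  fixes c :: real
  assumes "0 < c" "0 < w"
  shows "(2 * c) powr (- real w) * (1 - 2 powr (- real w)) powr (-1) = c powr (- real w) / (2^w - 1)"
proof -
  have "(1::real) < 2^w"
    using assms by (simp add: one_less_power)
  moreover have "2 powr (- real w) = 1 / 2^w"
    by (simp add: powr_minus powr_realpow divide_inverse)
  moreover have "(2 * c) powr (- real w) = 2 powr (- real w) * c powr (- real w)"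
    using assms(1) by (simp add: powr_mult)
  ultimately show ?thesis
    by (simp add: powr_minus field_simps)
qed

lemma two_powr_neg_root:
  assumes "0 < w"
  shows "(2 powr (- real w)) powr (1 / real w) = 1/2"
proof -
  have "(2 powr (- real w)) powr (1 / real w) = 2 powr (- real w * (1 / real w))"
    by (rule powr_powr)
  also have "\<dots> = 1/2"
    using assms by (simp add: powr_minus)
  finally show ?thesis .
qed

lemma sqrt_one_minus_two_powr:
  assumes "0 < w"
  shows "0 < sqrt (1 - 2 powr (- real w))" "sqrt (1 - 2 powr (- real w)) < 1"
    "(sqrt (1 - 2 powr (- real w)))\<^sup>2 = 1 - 2 powr (- real w)"
proof -
  have "0 < 2 powr (- real w)" "2 powr (- real w) < 1"
    using assms by (auto simp: powr_less_one)
  then show "0 < sqrt (1 - 2 powr (- real w))" "sqrt (1 - 2 powr (- real w)) < 1"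
    "(sqrt (1 - 2 powr (- real w)))\<^sup>2 = 1 - 2 powr (- real w)"
    by auto
qed

lemma root_of_complement_bounds:
  assumes "0 < w" "sqrt (1 - 2 powr (- real w)) \<le> y" "y < 1"
  shows "0 < (1 - y\<^sup>2) powr (1 / real w)" "(1 - y\<^sup>2) powr (1 / real w) \<le> 1/2"
proof -
  have "0 < y"
    using assms(2) sqrt_one_minus_two_powr(1)[OF assms(1)] by linarith
  then have "0 < 1 - y\<^sup>2"
    using assms(3) by (simp add: power2_less_1_iff abs_less_iff)
  then show "0 < (1 - y\<^sup>2) powr (1 / real w)"
    by simp
  have "(sqrt (1 - 2 powr (- real w)))\<^sup>2 \<le> y\<^sup>2"
    using assms(2) sqrt_one_minus_two_powr(1)[OF assms(1)] by (intro power_mono) auto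
  then have "1 - y\<^sup>2 \<le> 2 powr (- real w)"
    using sqrt_one_minus_two_powr(3)[OF assms(1)] by linarith
  then have "(1 - y\<^sup>2) powr (1 / real w) \<le> (2 powr (- real w)) powr (1 / real w)"
    using \<open>0 < 1 - y\<^sup>2\<close> by (intro powr_mono2) auto
  then show "(1 - y\<^sup>2) powr (1 / real w) \<le> 1/2"
    using two_powr_neg_root[OF assms(1)] by simp
qed

theorem lemma27:
  shows "(\<forall>w::nat. w \<ge> 2 \<longrightarrow>
            (\<forall>y::real. sqrt (1 - 2 powr (- real w)) \<le> y \<and> y < 1 \<longrightarrow>
               g y w \<le> K w * g (sqrt (1 - 2 powr (- real w))) w)
          \<and> K w * g (sqrt (1 - 2 powr (- real w))) w
              = 0.15 * K w * alpha_const powr (- real_of_int (l_w w)) * real w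
                * (2 * c_const) powr (- real w) * (1 - 2 powr (- real w)) powr (-1))
        \<and> (\<forall>w::nat. w \<ge> 2 \<longrightarrow> K (w + 1) \<le> K w)"
proof (intro conjI allI impI)
  fix w :: nat
  assume w: "2 \<le> w"
  let ?y0 = "sqrt (1 - 2 powr (- real w))"
  have y0: "g ?y0 w = g_scale w * g_core w (1/2)"
    using w g_eq_scale_core[of ?y0 w] sqrt_one_minus_two_powr[of w] two_powr_neg_root[of w]
    by simp
  have "0.15 * K w * alpha_const powr (- real_of_int (l_w w)) * real w
      * (2 * c_const) powr (- real w) * (1 - 2 powr (- real w)) powr (-1)
    = 0.15 * (K w * (alpha_const powr (- real_of_int (l_w w)) * (real w
      * (c_const powr (- real w) / (2^w - 1)))))"
    using w two_powr_neg_ratio[of c_const w] by (simp only: mult.assoc) (simp add: c_const_def)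
  then show "K w * g ?y0 w = 0.15 * K w * alpha_const powr (- real_of_int (l_w w)) * real w
      * (2 * c_const) powr (- real w) * (1 - 2 powr (- real w)) powr (-1)"
    using w by (simp add: y0 g_core_half g_scale_def)
  fix y :: real
  assume y: "?y0 \<le> y \<and> y < 1"
  then have "0 < y"
    using w sqrt_one_minus_two_powr(1)[of w] by linarith
  have "g y w = g_scale w * g_core w ((1 - y\<^sup>2) powr (1 / real w))"
    using w y \<open>0 < y\<close> by (simp add: g_eq_scale_core)
  also have "\<dots> \<le> g_scale w * (K w * g_core w (1/2))"
    using w y g_scale_pos[of w] root_of_complement_bounds[of w y]
    by (intro mult_left_mono g_core_le) auto
  also have "\<dots> = K w * g ?y0 w"
    unfolding y0 by (rule mult.left_commute)
  finally show "g y w \<le> K w * g ?y0 w" .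
next
  fix w :: nat
  assume "2 \<le> w"
  then show "K (w + 1) \<le> K w"
    by (simp add: K_def)
qed

end
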